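(* Let $X\sim\mathsf{Bernoulli}(p)$ (i.e. $\Pr(X=1)=p$) with $p\in[\frac12,1)$, and let $Y\in\{0,1\}$ be obtained from $X$ through the binary channel $P_{Y|X}=\mathsf{BIBO}(\alpha,\beta)$, i.e. $P_{Y|X}(\cdot|0)=(\bar\alpha,\alpha)$ and $P_{Y|X}(\cdot|1)=(\beta,\bar\beta)$, with $\alpha,\beta\in[0,\frac12)$ and $\bar\alpha\bar p>\beta p$. Let $q=\Pr(Y=1)=\alpha\bar p+\bar\beta p$ and for $\varepsilon$ define $$\zeta(\varepsilon)=\frac{\bar\alpha\bar p+\bar\beta p-\varepsilon}{\bar\beta p-\alpha\bar p},\qquad \tilde\zeta(\varepsilon)=\frac{\bar\alpha\bar p+\bar\beta p-\varepsilon}{\bar\alpha\bar p-\beta p}.$$ Then for every $\varepsilon\in[p,\bar\alpha\bar p+\bar\beta p]=[\mathsf{P}_{\mathsf{c}}(X),\mathsf{P}_{\mathsf{c}}(X|Y)]$, $$\mathcal{h}(\varepsilon)=\begin{cases}1-\zeta(\varepsilon)q, & \alpha\bar\alpha\bar p^2<\beta\bar\beta p^2,\\ 1-\tilde\zeta(\varepsilon)\bar q, & \alpha\bar\alpha\bar p^2\ge\beta\bar\beta p^2.\end{cases}$$ Furthermore, when $\alpha\bar\alpha\bar p^2<\beta\bar\beta p^2$ the Z-channel $P_{Z|Y}$ on $\{0,1\}$ given by $P_{Z|Y}(0|0)=1$, $P_{Z|Y}(0|1)=\zeta(\varepsilon)$, $P_{Z|Y}(1|1)=1-\zeta(\varepsilon)$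 achieves $\mathcal{h}(\varepsilon)$ (i.e. satisfies $\mathsf{P}_{\mathsf{c}}(X|Z)\le\varepsilon$ and $\mathsf{P}_{\mathsf{c}}(Y|Z)=\mathcal{h}(\varepsilon)$), and when $\alpha\bar\alpha\bar p^2\ge\beta\bar\beta p^2$ the reverse Z-channel $P_{Z|Y}(0|0)=1-\tilde\zeta(\varepsilon)$, $P_{Z|Y}(1|0)=\tilde\zeta(\varepsilon)$, $P_{Z|Y}(1|1)=1$ achieves $\mathcal{h}(\varepsilon)$.
   Context: For $a\in[0,1]$, $\bar a=1-a$. For discrete random variables, $\mathsf{P}_{\mathsf{c}}(X)=\max_x P_X(x)$ and $\mathsf{P}_{\mathsf{c}}(X|Z)=\sum_z\max_x P_{XZ}(x,z)$. The privacy-constrained guessing function is $\mathcal{h}(\varepsilon)=\sup\{\mathsf{P}_{\mathsf{c}}(Y|Z): P_{Z|Y},\ X - Y - Z,\ \mathsf{P}_{\mathsf{c}}(X|Z)\le\varepsilon\}$, the supremum being over all channels $P_{Z|Y}$ into finite alphabets with $X - Y - Z$ a Markov chain. *)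

theory Defs
  imports Complex_Main
begin

text \<open>Alphabets: X and Y take values in {0,1} (value 1 means "X=1"); a channel
P_{Z|Y} into a finite alphabet is represented, up to relabelling, as a
row-stochastic kernel W y z with output alphabet {0..<n}.\<close>

definition PXY :: "real \<Rightarrow> real \<Rightarrow> real \<Rightarrow> nat \<Rightarrow> nat \<Rightarrow> real" where
  "PXY p a b x y =
     (if x = 1 then p else 1 - p) *
     (if x = 0 then (if y = 0 then 1 - a else a) else (if y = 0 then b else 1 - b))"

definition is_channel :: "nat \<Rightarrow> (nat \<Rightarrow> nat \<Rightarrow> real) \<Rightarrow> bool" where
  "is_channel n W \<longleftrightarrow> (\<forall>y\<in>{0::nat,1}. (\<forall>z<n. 0 \<le> W y z) \<and> (\<Sum>z<n. W y z) = 1)"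

definition Pc_XZ :: "real \<Rightarrow> real \<Rightarrow> real \<Rightarrow> nat \<Rightarrow> (nat \<Rightarrow> nat \<Rightarrow> real) \<Rightarrow> real" where
  "Pc_XZ p a b n W = (\<Sum>z<n. Max ((\<lambda>x. \<Sum>y\<in>{0::nat,1}. PXY p a b x y * W y z) ` {0::nat,1}))"

definition Pc_YZ :: "real \<Rightarrow> real \<Rightarrow> real \<Rightarrow> nat \<Rightarrow> (nat \<Rightarrow> nat \<Rightarrow> real) \<Rightarrow> real" where
  "Pc_YZ p a b n W = (\<Sum>z<n. Max ((\<lambda>y. \<Sum>x\<in>{0::nat,1}. PXY p a b x y * W y z) ` {0::nat,1}))"

definition hfun :: "real \<Rightarrow> real \<Rightarrow> real \<Rightarrow> real \<Rightarrow> real" where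
  "hfun p a b eps = Sup {Pc_YZ p a b n W | n W. is_channel n W \<and> Pc_XZ p a b n W \<le> eps}"

end

theory Submission
  imports Defs
begin

text \<open>Let A0, A1, B0, B1 be the joint masses P(X=0,Y=0), P(X=0,Y=1), P(X=1,Y=0), P(X=1,Y=1).
If A1 < B1 and A0 A1 \<le> B0 B1, then for every output letter z the quantity max_y P(y,z) is
bounded by an affine combination of max_x P(x,z), P(z|Y=0) and P(z|Y=1); summing over z yields
(B1 - A1) P_c(Y|Z) \<le> (A1 + B1) P_c(X|Z) + const for every channel, and the Z-channel attains
this bound with P_c(X|Z) = \<epsilon>. Relabelling both X and Y turns the masses into (B1, B0, A1, A0),
so the other case of the theorem is the same argument.\<close>

lemma max_guess_Y_le_max_guess_X:
  fixes A0 A1 B0 B1 s t :: real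
  assumes "0 \<le> A0" "0 \<le> A1" "0 \<le> B0" "0 \<le> B1" "0 \<le> s" "0 \<le> t"
    and "A1 < B1" and "A0 * A1 \<le> B0 * B1"
  shows "(B1 - A1) * max ((A0 + B0) * s) ((A1 + B1) * t)
    \<le> (A1 + B1) * max (A0 * s + A1 * t) (B0 * s + B1 * t)
       + ((B1 - A1) * (A0 + B0) - (A1 + B1) * A0) * s - (A1 + B1) * A1 * t"
proof -
  have "0 \<le> A1 + B1" using assms by linarith
  then have X0: "(A1 + B1) * (A0 * s + A1 * t) \<le> (A1 + B1) * max (A0 * s + A1 * t) (B0 * s + B1 * t)"
    and X1: "(A1 + B1) * (B0 * s + B1 * t) \<le> (A1 + B1) * max (A0 * s + A1 * t) (B0 * s + B1 * t)"
    by (simp_all add: mult_left_mono)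
  have "0 \<le> s * (2 * (B0 * B1 - A0 * A1))"
    using assms by simp
  then have "(B1 - A1) * ((A1 + B1) * t) \<le> (A1 + B1) * (B0 * s + B1 * t)
      + ((B1 - A1) * (A0 + B0) - (A1 + B1) * A0) * s - (A1 + B1) * A1 * t"
    by (simp add: algebra_simps)
  moreover have "(B1 - A1) * ((A0 + B0) * s) = (A1 + B1) * (A0 * s + A1 * t)
      + ((B1 - A1) * (A0 + B0) - (A1 + B1) * A0) * s - (A1 + B1) * A1 * t"
    by (simp add: algebra_simps)
  ultimately show ?thesis
    using X0 X1 by (cases "(A0 + B0) * s \<le> (A1 + B1) * t") (simp_all add: max_def)
qed

lemma guess_Y_le_affine_guess_X:
  fixes A0 A1 B0 B1 e :: real and u v :: "nat \<Rightarrow> real"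
  assumes "0 \<le> A0" "0 \<le> A1" "0 \<le> B0" "0 \<le> B1" "A0 + A1 + B0 + B1 = 1"
    and "A1 < B1" and "A0 * A1 \<le> B0 * B1"
    and "\<And>z. z < n \<Longrightarrow> 0 \<le> u z" "\<And>z. z < n \<Longrightarrow> 0 \<le> v z"
    and u1: "(\<Sum>z<n. u z) = 1" and v1: "(\<Sum>z<n. v z) = 1"
    and guess_X: "(\<Sum>z<n. max (A0 * u z + A1 * v z) (B0 * u z + B1 * v z)) \<le> e"
  shows "(\<Sum>z<n. max ((A0 + B0) * u z) ((A1 + B1) * v z)) \<le> 1 - (A0 + B1 - e) / (B1 - A1) * (A1 + B1)"
proof -
  define c where "c = (B1 - A1) * (A0 + B0) - (A1 + B1) * A0"
  have "(B1 - A1) * (\<Sum>z<n. max ((A0 + B0) * u z) ((A1 + B1) * v z))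
      \<le> (\<Sum>z<n. (A1 + B1) * max (A0 * u z + A1 * v z) (B0 * u z + B1 * v z)
                 + c * u z - (A1 + B1) * A1 * v z)"
    unfolding sum_distrib_left c_def by (intro sum_mono max_guess_Y_le_max_guess_X) (use assms in auto)
  also have "\<dots> = (A1 + B1) * (\<Sum>z<n. max (A0 * u z + A1 * v z) (B0 * u z + B1 * v z))
      + c - (A1 + B1) * A1"
    by (simp add: sum.distrib sum_subtractf u1 v1 flip: sum_distrib_left)
  also have "\<dots> \<le> (A1 + B1) * e + c - (A1 + B1) * A1"
    using guess_X assms by (simp add: mult_left_mono)
  also have "\<dots> = (B1 - A1) - (A0 + B1 - e) * (A1 + B1)"
    using \<open>A0 + A1 + B0 + B1 = 1\<close> unfolding c_def by algebra
  also have "\<dots> = (B1 - A1) * (1 - (A0 + B1 - e) / (B1 - A1) * (A1 + B1))"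
    using \<open>A1 < B1\<close> by (simp add: field_simps)
  finally show ?thesis using \<open>A1 < B1\<close> by simp
qed

lemma Z_channel_guessing:
  fixes A0 A1 B0 B1 e \<zeta> :: real
  assumes "0 \<le> A0" "0 \<le> A1" "0 \<le> B0" "0 \<le> B1" "A0 + A1 + B0 + B1 = 1"
    and "A1 < B1" and "A0 * A1 \<le> B0 * B1"
    and "A0 + A1 \<le> e" "B0 + B1 \<le> e" "e \<le> A0 + B1"
    and \<zeta>: "\<zeta> = (A0 + B1 - e) / (B1 - A1)"
  shows "0 \<le> \<zeta>" "\<zeta> \<le> 1"
    and "max (A0 + A1 * \<zeta>) (B0 + B1 * \<zeta>) + max (A1 * (1 - \<zeta>)) (B1 * (1 - \<zeta>)) = e"
    and "max (A0 + B0) ((A1 + B1) * \<zeta>) + max 0 ((A1 + B1) * (1 - \<zeta>)) = 1 - \<zeta> * (A1 + B1)"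
proof -
  have \<zeta>_eq: "\<zeta> * (B1 - A1) = A0 + B1 - e" unfolding \<zeta> using assms by simp
  show "0 \<le> \<zeta>" unfolding \<zeta> using assms by simp
  show "\<zeta> \<le> 1" using \<zeta>_eq assms by (simp add: mult_le_cancel_right1)
  have \<zeta>_X: "\<zeta> * (B1 - A1) \<le> A0 - B0" using \<zeta>_eq assms by linarith
  then have "\<zeta> * (B1 - A1) * (A1 + B1) \<le> (A0 - B0) * (A1 + B1)"
    using assms by (intro mult_right_mono) auto
  also have "\<dots> \<le> (B1 - A1) * (A0 + B0)" using assms by (simp add: algebra_simps)
  finally have "(B1 - A1) * ((A1 + B1) * \<zeta>) \<le> (B1 - A1) * (A0 + B0)"
    by (simp add: algebra_simps)
  then have "(A1 + B1) * \<zeta> \<le> A0 + B0" using \<open>A1 < B1\<close> by simp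
  moreover have "0 \<le> (A1 + B1) * (1 - \<zeta>)" using \<open>\<zeta> \<le> 1\<close> assms by simp
  ultimately show "max (A0 + B0) ((A1 + B1) * \<zeta>) + max 0 ((A1 + B1) * (1 - \<zeta>)) = 1 - \<zeta> * (A1 + B1)"
    using assms by (simp add: algebra_simps)
  have "A1 * (1 - \<zeta>) \<le> B1 * (1 - \<zeta>)"
    using \<open>\<zeta> \<le> 1\<close> assms by (intro mult_right_mono) auto
  moreover have "B0 + B1 * \<zeta> \<le> A0 + A1 * \<zeta>" using \<zeta>_X by (simp add: algebra_simps)
  ultimately show "max (A0 + A1 * \<zeta>) (B0 + B1 * \<zeta>) + max (A1 * (1 - \<zeta>)) (B1 * (1 - \<zeta>)) = e"
    using \<zeta>_eq by (simp add: algebra_simps)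
qed

lemma Pc_XZ_eq:
  "Pc_XZ p a b n W = (\<Sum>z<n. max ((1 - p) * (1 - a) * W 0 z + (1 - p) * a * W 1 z)
                                  (p * b * W 0 z + p * (1 - b) * W 1 z))"
  unfolding Pc_XZ_def PXY_def by (simp add: algebra_simps)

lemma Pc_YZ_eq:
  "Pc_YZ p a b n W = (\<Sum>z<n. max (((1 - p) * (1 - a) + p * b) * W 0 z)
                                  (((1 - p) * a + p * (1 - b)) * W 1 z))"
  unfolding Pc_YZ_def PXY_def by (simp add: algebra_simps)

lemma hfun_eqI:
  assumes "is_channel n W" "Pc_XZ p a b n W \<le> e" "Pc_YZ p a b n W = h"
    and "\<And>m V. is_channel m V \<Longrightarrow> Pc_XZ p a b m V \<le> e \<Longrightarrow> Pc_YZ p a b m V \<le> h"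
  shows "hfun p a b e = h"
  unfolding hfun_def using assms by (intro cSup_eq_maximum) blast+

lemma is_channel_2:
  "is_channel 2 W \<longleftrightarrow> (\<forall>y\<in>{0,1}. 0 \<le> W y 0 \<and> 0 \<le> W y 1 \<and> W y 0 + W y 1 = 1)"
  unfolding is_channel_def by (auto simp: numeral_2_eq_2 less_Suc_eq)

lemma hfun_Z_channel:
  fixes p a b e :: real
  assumes "1/2 \<le> p" "p < 1" "0 \<le> a" "a < 1/2" "0 \<le> b" "b < 1/2"
    and "a * (1 - a) * (1 - p)^2 \<le> b * (1 - b) * p^2"
    and "p \<le> e" "e \<le> (1 - a) * (1 - p) + (1 - b) * p"
    and \<zeta>: "\<zeta> = ((1 - a) * (1 - p) + (1 - b) * p - e) / ((1 - b) * p - a * (1 - p))"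
    and W: "W = (\<lambda>y z. if y = 0 then (if z = 0 then 1 else 0) else (if z = 0 then \<zeta> else 1 - \<zeta>))"
  shows "hfun p a b e = 1 - \<zeta> * (a * (1 - p) + (1 - b) * p)
    \<and> is_channel 2 W \<and> Pc_XZ p a b 2 W \<le> e \<and> Pc_YZ p a b 2 W = hfun p a b e"
proof -
  define A0 A1 B0 B1 where "A0 = (1 - p) * (1 - a)" "A1 = (1 - p) * a" "B0 = p * b" "B1 = p * (1 - b)"
  have masses: "0 \<le> A0" "0 \<le> A1" "0 \<le> B0" "0 \<le> B1" "A0 + A1 + B0 + B1 = 1"
    using assms(1-6) unfolding A0_A1_B0_B1_def by (simp_all, simp add: algebra_simps)
  have "A1 \<le> 1/2 * (1/2)" unfolding A0_A1_B0_B1_def using assms by (intro mult_mono) auto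
  moreover have "1/2 * (1/2) < B1" unfolding A0_A1_B0_B1_def using assms by (intro mult_le_less_imp_less) auto
  ultimately have "A1 < B1" by linarith
  have "A0 * A1 \<le> B0 * B1"
    using assms unfolding A0_A1_B0_B1_def by (simp add: power2_eq_square algebra_simps)
  have "A0 + A1 \<le> e" "B0 + B1 \<le> e" "e \<le> A0 + B1"
    using assms unfolding A0_A1_B0_B1_def by (auto simp: algebra_simps)
  have \<zeta>': "\<zeta> = (A0 + B1 - e) / (B1 - A1)" unfolding \<zeta> A0_A1_B0_B1_def by (simp add: algebra_simps)
  note Z = Z_channel_guessing[OF masses \<open>A1 < B1\<close> \<open>A0 * A1 \<le> B0 * B1\<close>
      \<open>A0 + A1 \<le> e\<close> \<open>B0 + B1 \<le> e\<close> \<open>e \<le> A0 + B1\<close> \<zeta>']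
  have h: "1 - \<zeta> * (a * (1 - p) + (1 - b) * p) = 1 - \<zeta> * (A1 + B1)"
    unfolding A0_A1_B0_B1_def by (simp add: algebra_simps)
  have "is_channel 2 W" unfolding is_channel_2 W using Z(1,2) by simp
  moreover have "Pc_XZ p a b 2 W = e"
    using Z(3) unfolding Pc_XZ_eq W by (simp add: numeral_2_eq_2 A0_A1_B0_B1_def algebra_simps)
  moreover have "Pc_YZ p a b 2 W = 1 - \<zeta> * (A1 + B1)"
    using Z(4) unfolding Pc_YZ_eq W by (simp add: numeral_2_eq_2 A0_A1_B0_B1_def algebra_simps)
  moreover have "Pc_YZ p a b m V \<le> 1 - \<zeta> * (A1 + B1)"
    if "is_channel m V" "Pc_XZ p a b m V \<le> e" for m V
    using that guess_Y_le_affine_guess_X[OF masses \<open>A1 < B1\<close> \<open>A0 * A1 \<le> B0 * B1\<close>, of m "V 0" "V 1" e]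
    unfolding \<zeta>' Pc_XZ_eq Pc_YZ_eq is_channel_def A0_A1_B0_B1_def by (simp add: algebra_simps)
  ultimately show ?thesis unfolding h using hfun_eqI by auto
qed

lemma hfun_reverse_Z_channel:
  fixes p a b e :: real
  assumes "1/2 \<le> p" "p < 1" "0 \<le> a" "a < 1/2" "0 \<le> b" "b < 1/2"
    and "b * p < (1 - a) * (1 - p)"
    and "b * (1 - b) * p^2 \<le> a * (1 - a) * (1 - p)^2"
    and "p \<le> e" "e \<le> (1 - a) * (1 - p) + (1 - b) * p"
    and \<zeta>: "\<zeta> = ((1 - a) * (1 - p) + (1 - b) * p - e) / ((1 - a) * (1 - p) - b * p)"
    and W: "W = (\<lambda>y z. if y = 0 then (if z = 0 then 1 - \<zeta> else \<zeta>) else (if z = 0 then 0 else 1))"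
  shows "hfun p a b e = 1 - \<zeta> * (1 - (a * (1 - p) + (1 - b) * p))
    \<and> is_channel 2 W \<and> Pc_XZ p a b 2 W \<le> e \<and> Pc_YZ p a b 2 W = hfun p a b e"
proof -
  \<comment> \<open>masses of the relabelled pair (1 - X, 1 - Y), under which the rows of a channel swap\<close>
  define A0 A1 B0 B1 where "A0 = p * (1 - b)" "A1 = p * b" "B0 = (1 - p) * a" "B1 = (1 - p) * (1 - a)"
  have masses: "0 \<le> A0" "0 \<le> A1" "0 \<le> B0" "0 \<le> B1" "A0 + A1 + B0 + B1 = 1"
    using assms(1-6) unfolding A0_A1_B0_B1_def by (simp_all, simp add: algebra_simps)
  have "A1 < B1" using assms unfolding A0_A1_B0_B1_def by (simp add: algebra_simps)
  have "A0 * A1 \<le> B0 * B1"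
    using assms unfolding A0_A1_B0_B1_def by (simp add: power2_eq_square algebra_simps)
  have "A0 + A1 \<le> e" "B0 + B1 \<le> e" "e \<le> A0 + B1"
    using assms unfolding A0_A1_B0_B1_def by (auto simp: algebra_simps)
  have \<zeta>': "\<zeta> = (A0 + B1 - e) / (B1 - A1)" unfolding \<zeta> A0_A1_B0_B1_def by (simp add: algebra_simps)
  note Z = Z_channel_guessing[OF masses \<open>A1 < B1\<close> \<open>A0 * A1 \<le> B0 * B1\<close>
      \<open>A0 + A1 \<le> e\<close> \<open>B0 + B1 \<le> e\<close> \<open>e \<le> A0 + B1\<close> \<zeta>']
  have h: "1 - \<zeta> * (1 - (a * (1 - p) + (1 - b) * p)) = 1 - \<zeta> * (A1 + B1)"
    unfolding A0_A1_B0_B1_def by (simp add: algebra_simps)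
  have "is_channel 2 W" unfolding is_channel_2 W using Z(1,2) by simp
  moreover have "Pc_XZ p a b 2 W = e"
    using Z(3) unfolding Pc_XZ_eq W by (simp add: numeral_2_eq_2 A0_A1_B0_B1_def algebra_simps max.commute)
  moreover have "Pc_YZ p a b 2 W = 1 - \<zeta> * (A1 + B1)"
    using Z(4) unfolding Pc_YZ_eq W by (simp add: numeral_2_eq_2 A0_A1_B0_B1_def algebra_simps max.commute)
  moreover have "Pc_YZ p a b m V \<le> 1 - \<zeta> * (A1 + B1)"
    if "is_channel m V" "Pc_XZ p a b m V \<le> e" for m V
    using that guess_Y_le_affine_guess_X[OF masses \<open>A1 < B1\<close> \<open>A0 * A1 \<le> B0 * B1\<close>, of m "V 1" "V 0" e]
    unfolding \<zeta>' Pc_XZ_eq Pc_YZ_eq is_channel_def A0_A1_B0_B1_def by (simp add: algebra_simps max.commute)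
  ultimately show ?thesis unfolding h using hfun_eqI by auto
qed

theorem theorem2:
  fixes p \<alpha> \<beta> \<epsilon> :: real
  assumes "1/2 \<le> p" "p < 1"
    and "0 \<le> \<alpha>" "\<alpha> < 1/2" "0 \<le> \<beta>" "\<beta> < 1/2"
    and "(1 - \<alpha>) * (1 - p) > \<beta> * p"
    and "p \<le> \<epsilon>" "\<epsilon> \<le> (1 - \<alpha>) * (1 - p) + (1 - \<beta>) * p"
  shows
    "let q = \<alpha> * (1 - p) + (1 - \<beta>) * p;
         \<zeta> = ((1 - \<alpha>) * (1 - p) + (1 - \<beta>) * p - \<epsilon>) / ((1 - \<beta>) * p - \<alpha> * (1 - p));
         \<zeta>' = ((1 - \<alpha>) * (1 - p) + (1 - \<beta>) * p - \<epsilon>) / ((1 - \<alpha>) * (1 - p) - \<beta> * p);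
         W = (\<lambda>y z. if y = 0 then (if z = 0 then 1 else 0)
                     else (if z = 0 then \<zeta> else 1 - \<zeta>));
         W' = (\<lambda>y z. if y = 0 then (if z = 0 then 1 - \<zeta>' else \<zeta>')
                      else (if z = 0 then 0 else 1))
     in (if \<alpha> * (1 - \<alpha>) * (1 - p)^2 < \<beta> * (1 - \<beta>) * p^2
         then hfun p \<alpha> \<beta> \<epsilon> = 1 - \<zeta> * q
              \<and> is_channel 2 W \<and> Pc_XZ p \<alpha> \<beta> 2 W \<le> \<epsilon> \<and> Pc_YZ p \<alpha> \<beta> 2 W = hfun p \<alpha> \<beta> \<epsilon>
         else hfun p \<alpha> \<beta> \<epsilon> = 1 - \<zeta>' * (1 - q)
              \<and> is_channel 2 W' \<and> Pc_XZ p \<alpha> \<beta> 2 W' \<le> \<epsilon> \<and> Pc_YZ p \<alpha> \<beta> 2 W' = hfun p \<alpha> \<beta> \<epsilon>)"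
proof (cases "\<alpha> * (1 - \<alpha>) * (1 - p)^2 < \<beta> * (1 - \<beta>) * p^2")
  case True
  show ?thesis
    unfolding Let_def if_P[OF True]
    by (rule hfun_Z_channel[OF assms(1-6) less_imp_le[OF True] assms(8,9) refl refl])
next
  case False
  show ?thesis
    unfolding Let_def if_not_P[OF False]
    by (rule hfun_reverse_Z_channel[OF assms(1-7) leI[OF False] assms(8,9) refl refl])
qed

end
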